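(* Let $K$ be a number field and $d\ge 0$. Let $N_0$ be a positive integer such that for every finite field extension $L/K$ with $[L:K]\le d^2$ and every root of unity $\zeta\in L$ one has $\zeta^{N_0}=1$, and put $N\coloneqq N_0$. Let $A\in\mathrm{GL}_d(K)$ and let $V\subseteq K^d$ be a vector subspace. If $V$ is $A^n$-invariant for some $n\ge1$, then $V$ is $A^N$-invariant.
   Context: A subspace $V$ is $B$-invariant if $BV\subseteq V$. *)

theory Defs
  imports Main "Jordan_Normal_Form.Matrix"
begin

text \<open>All fields are realised as subfields of the complex numbers.\<close>

definition subfield :: "complex set \<Rightarrow> bool" where
  "subfield F \<longleftrightarrow> 0 \<in> F \<and> 1 \<in> F \<and>
     (\<forall>x\<in>F. \<forall>y\<in>F. x + y \<in> F \<and> x * y \<in> F) \<and>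
     (\<forall>x\<in>F. - x \<in> F) \<and> (\<forall>x\<in>F. x \<noteq> 0 \<longrightarrow> inverse x \<in> F)"

definition span_over :: "complex set \<Rightarrow> complex set \<Rightarrow> complex set" where
  "span_over K S = {x. \<exists>T c. finite T \<and> T \<subseteq> S \<and> (\<forall>t\<in>T. c t \<in> K) \<and>
                              x = (\<Sum>t\<in>T. c t * t)}"

definition lin_indep_over :: "complex set \<Rightarrow> complex set \<Rightarrow> bool" where
  "lin_indep_over K S \<longleftrightarrow> (\<forall>T c. finite T \<and> T \<subseteq> S \<and> (\<forall>t\<in>T. c t \<in> K) \<and>
                              (\<Sum>t\<in>T. c t * t) = 0 \<longrightarrow> (\<forall>t\<in>T. c t = 0))"

definition is_basis_over :: "complex set \<Rightarrow> complex set \<Rightarrow> complex set \<Rightarrow> bool" where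
  "is_basis_over K L B \<longleftrightarrow> B \<subseteq> L \<and> lin_indep_over K B \<and> span_over K B = L"

definition finite_ext :: "complex set \<Rightarrow> complex set \<Rightarrow> bool" where
  "finite_ext K L \<longleftrightarrow> subfield K \<and> subfield L \<and> K \<subseteq> L \<and>
                      (\<exists>B. finite B \<and> is_basis_over K L B)"

text \<open>The degree [L:K], the cardinality of a basis (meaningful when finite_ext K L).\<close>
definition ext_degree :: "complex set \<Rightarrow> complex set \<Rightarrow> nat" where
  "ext_degree K L = card (SOME B. finite B \<and> is_basis_over K L B)"

definition number_field :: "complex set \<Rightarrow> bool" where
  "number_field K \<longleftrightarrow> finite_ext \<rat> K"

definition root_of_unity :: "complex \<Rightarrow> bool" where
  "root_of_unity z \<longleftrightarrow> (\<exists>m>0. z ^ m = 1)"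

definition entries_in :: "complex set \<Rightarrow> complex mat \<Rightarrow> bool" where
  "entries_in K A \<longleftrightarrow> (\<forall>i<dim_row A. \<forall>j<dim_col A. A $$ (i, j) \<in> K)"

definition GL_over :: "nat \<Rightarrow> complex set \<Rightarrow> complex mat set" where
  "GL_over d K = {A. A \<in> carrier_mat d d \<and> entries_in K A \<and>
     (\<exists>B. B \<in> carrier_mat d d \<and> entries_in K B \<and> A * B = 1\<^sub>m d \<and> B * A = 1\<^sub>m d)}"

definition Kvecs :: "complex set \<Rightarrow> nat \<Rightarrow> complex vec set" where
  "Kvecs K d = {v. v \<in> carrier_vec d \<and> (\<forall>i<d. v $ i \<in> K)}"

definition K_subspace :: "complex set \<Rightarrow> nat \<Rightarrow> complex vec set \<Rightarrow> bool" where
  "K_subspace K d V \<longleftrightarrow> V \<subseteq> Kvecs K d \<and> 0\<^sub>v d \<in> V \<and>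
     (\<forall>v\<in>V. \<forall>w\<in>V. v + w \<in> V) \<and> (\<forall>c\<in>K. \<forall>v\<in>V. c \<cdot>\<^sub>v v \<in> V)"

definition invariant_under :: "complex mat \<Rightarrow> complex vec set \<Rightarrow> bool" where
  "invariant_under B V \<longleftrightarrow> (\<forall>v\<in>V. B *\<^sub>v v \<in> V)"

end

theory Submission
  imports Defs "Jordan_Normal_Form.VS_Connect" "Jordan_Normal_Form.Char_Poly"
begin

(*
  Let c, c' be eigenvalues of A. They are roots of the characteristic polynomial, a monic
  polynomial of degree d over K, so K(c, c') is an extension of degree at most d^2. If
  c^(N n) = c'^(N n), then c / c' is a root of unity in that field, hence c^N = c'^N by the
  choice of N. So x |-> x^n is injective on the N-th powers of the eigenvalues, and
  interpolation yields a complex polynomial Q with X^N = Q(X^n) modulo any product of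
  factors X - c over eigenvalues c. For v in V such a product annihilates v, so
  A^N v = Q(A^n) v. Finally, a K-linear retraction of C onto K, applied to the coefficients
  of Q, does not change Q(A^n) v, because A^n, v and A^N v are defined over K; and a
  polynomial with coefficients in K maps v into V, since V is A^n-invariant.
*)

section \<open>Linear algebra over a subfield of the complex numbers\<close>

lemma subfieldD:
  assumes "subfield K"
  shows subfield_zero: "0 \<in> K" and subfield_one: "1 \<in> K"
    and subfield_add: "\<And>x y. x \<in> K \<Longrightarrow> y \<in> K \<Longrightarrow> x + y \<in> K"
    and subfield_mult: "\<And>x y. x \<in> K \<Longrightarrow> y \<in> K \<Longrightarrow> x * y \<in> K"
    and subfield_uminus: "\<And>x. x \<in> K \<Longrightarrow> - x \<in> K"
    and subfield_inverse: "\<And>x. x \<in> K \<Longrightarrow> inverse x \<in> K"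
  using assms unfolding subfield_def by (auto simp: inverse_eq_divide)

lemma subfield_diff: "subfield K \<Longrightarrow> x \<in> K \<Longrightarrow> y \<in> K \<Longrightarrow> x - y \<in> K"
  using subfield_add[of K x "- y"] subfield_uminus[of K y] by simp

lemma subfield_sum:
  assumes K: "subfield K" and f: "\<And>i. i \<in> I \<Longrightarrow> f i \<in> K"
  shows "sum f I \<in> K"
  using f
  by (induction I rule: infinite_finite_induct)
    (simp_all add: subfield_zero[OF K] subfield_add[OF K])

(*
  The complex numbers as a vector space over K in the sense of the VectorSpace library
  underlying Jordan_Normal_Form; the context below identifies its span and linear dependence
  with span_over and lin_indep_over, which makes the library's exchange lemma available.
*)
definition subfield_ring :: "complex set \<Rightarrow> complex ring" where
  "subfield_ring K = \<lparr>carrier = K, mult = (*), one = 1, zero = 0, add = (+)\<rparr>"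

definition complex_module :: "(complex, complex) module" where
  "complex_module =
    \<lparr>carrier = UNIV, mult = (*), one = 1, zero = 0, add = (+), Module.module.smult = (*)\<rparr>"

lemma subfield_ring_simps [simp]:
  "carrier (subfield_ring K) = K" "zero (subfield_ring K) = 0" "one (subfield_ring K) = 1"
  "add (subfield_ring K) = (+)" "mult (subfield_ring K) = (*)"
  by (simp_all add: subfield_ring_def)

lemma complex_module_simps [simp]:
  "carrier complex_module = UNIV" "zero complex_module = 0"
  "add complex_module = (+)" "Module.module.smult complex_module = (*)"
  by (simp_all add: complex_module_def)

lemma cring_subfield_ring:
  assumes K: "subfield K"
  shows "cring (subfield_ring K)"
proof (rule cringI)
  show "abelian_group (subfield_ring K)"
    by (rule abelian_groupI) (auto simp: subfield_ring_def subfieldD[OF K] intro!: bexI[of _ "- _"])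
  show "Group.comm_monoid (subfield_ring K)"
    by (rule comm_monoidI) (auto simp: subfield_ring_def subfieldD[OF K])
qed (auto simp: subfield_ring_def distrib_right)

lemma field_subfield_ring:
  assumes K: "subfield K"
  shows "field (subfield_ring K)"
proof (rule cring.cring_fieldI2[OF cring_subfield_ring[OF K]])
  fix a assume "a \<in> carrier (subfield_ring K)" "a \<noteq> \<zero>\<^bsub>subfield_ring K\<^esub>"
  then show "\<exists>b\<in>carrier (subfield_ring K). a \<otimes>\<^bsub>subfield_ring K\<^esub> b = \<one>\<^bsub>subfield_ring K\<^esub>"
    using subfield_inverse[OF K] by (auto simp: subfield_ring_def intro!: bexI[of _ "inverse a"])
qed (simp add: subfield_ring_def)

lemma finsum_complex_module: "finsum complex_module f A = sum f A"
proof -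
  interpret abelian_monoid complex_module by unfold_locales (auto simp: complex_module_def)
  show ?thesis
  proof (induction A rule: infinite_finite_induct)
    case (insert x F)
    have "finsum complex_module f (insert x F) = f x \<oplus>\<^bsub>complex_module\<^esub> finsum complex_module f F"
      by (rule finsum_insert) (use insert in \<open>auto simp: complex_module_def\<close>)
    then show ?case using insert by (simp add: complex_module_def)
  qed (simp_all add: finsum_def finprod_def complex_module_def)
qed

lemma vectorspace_complex_module:
  assumes K: "subfield K"
  shows "vectorspace (subfield_ring K) complex_module"
  by (intro vectorspace.intro module_criteria cring_subfield_ring[OF K] field_subfield_ring[OF K])
    (auto simp: complex_module_def subfield_ring_def distrib_left distrib_right
      intro: exI[of _ "- _"])

context
  fixes K :: "complex set"
  assumes K: "subfield K"
begin

interpretation vectorspace "subfield_ring K" complex_module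
  by (rule vectorspace_complex_module[OF K])

lemma lincomb_complex_module: "lincomb a A = (\<Sum>v\<in>A. a v * v)"
  unfolding lincomb_def finsum_complex_module by simp

lemma span_complex_module: "span S = span_over K S"
  unfolding span_def span_over_def lincomb_complex_module by auto

lemma lin_dep_complex_module: "lin_dep S \<longleftrightarrow> \<not> lin_indep_over K S"
  unfolding lin_dep_def lin_indep_over_def lincomb_complex_module
  by auto

lemma submodule_span_over: "submodule (subfield_ring K) (span_over K S) complex_module"
  using span_is_submodule[of S] by (simp add: span_complex_module)

lemma span_over_zero: "0 \<in> span_over K S"
  using submodule.zero_closed[OF submodule_span_over] by simp

lemma span_over_add: "x \<in> span_over K S \<Longrightarrow> y \<in> span_over K S \<Longrightarrow> x + y \<in> span_over K S"
  using submodule.m_closed[OF submodule_span_over] by simp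

lemma span_over_smult: "a \<in> K \<Longrightarrow> x \<in> span_over K S \<Longrightarrow> a * x \<in> span_over K S"
  using submodule.smult_closed[OF submodule_span_over]
  by simp

lemma span_over_uminus: "x \<in> span_over K S \<Longrightarrow> - x \<in> span_over K S"
  using span_over_smult[of "- 1"] subfield_one[OF K] subfield_uminus[OF K] by fastforce

lemma span_over_diff: "x \<in> span_over K S \<Longrightarrow> y \<in> span_over K S \<Longrightarrow> x - y \<in> span_over K S"
  using span_over_add[of x S "- y"] span_over_uminus[of y S] by simp

lemma span_over_sum: "(\<And>i. i \<in> I \<Longrightarrow> f i \<in> span_over K S) \<Longrightarrow> sum f I \<in> span_over K S"
  by (induction I rule: infinite_finite_induct) (auto intro: span_over_zero span_over_add)

lemma span_over_superset: "S \<subseteq> span_over K S"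
  using in_own_span[of S] by (simp add: span_complex_module)

lemma span_over_subset: "S \<subseteq> span_over K T \<Longrightarrow> span_over K S \<subseteq> span_over K T"
  using span_is_subset[OF _ submodule_span_over] by (simp add: span_complex_module)

lemma span_over_mono: "S \<subseteq> T \<Longrightarrow> span_over K S \<subseteq> span_over K T"
  using span_is_monotone by (simp add: span_complex_module)

lemma span_over_insert:
  "x \<in> span_over K (insert s S) \<longleftrightarrow> (\<exists>a\<in>K. x - a * s \<in> span_over K S)"
proof
  assume "x \<in> span_over K (insert s S)"
  then obtain T c where T: "finite T" "T \<subseteq> insert s S" "\<forall>t\<in>T. c t \<in> K"
    and x: "x = (\<Sum>t\<in>T. c t * t)"
    unfolding span_over_def by blast
  define a where "a = (if s \<in> T then c s else 0)"
  have "x - a * s = (\<Sum>t\<in>T - {s}. c t * t)"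
    unfolding x a_def using T(1) by (simp add: sum_diff1)
  also have "\<dots> \<in> span_over K S"
    unfolding span_over_def using T by blast
  finally show "\<exists>a\<in>K. x - a * s \<in> span_over K S"
    using T(3) subfield_zero[OF K] unfolding a_def by (metis (full_types))
next
  assume "\<exists>a\<in>K. x - a * s \<in> span_over K S"
  then obtain a where a: "a \<in> K" and rest: "x - a * s \<in> span_over K S" by blast
  have "a * s \<in> span_over K (insert s S)"
    using span_over_smult[OF a] span_over_superset[of "insert s S"] by simp
  moreover have "x - a * s \<in> span_over K (insert s S)"
    using span_over_mono[of S "insert s S"] rest by auto
  ultimately have "a * s + (x - a * s) \<in> span_over K (insert s S)"
    by (rule span_over_add)
  then show "x \<in> span_over K (insert s S)" by simp
qed

lemma span_over_mult:
  assumes x: "x \<in> span_over K S" and y: "y \<in> span_over K T"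
  shows "x * y \<in> span_over K {s * t | s t. s \<in> S \<and> t \<in> T}"
proof -
  obtain A a where A: "finite A" "A \<subseteq> S" "\<forall>s\<in>A. a s \<in> K" and xa: "x = (\<Sum>s\<in>A. a s * s)"
    using x unfolding span_over_def by blast
  obtain B b where B: "finite B" "B \<subseteq> T" "\<forall>t\<in>B. b t \<in> K" and yb: "y = (\<Sum>t\<in>B. b t * t)"
    using y unfolding span_over_def by blast
  have "x * y = (\<Sum>s\<in>A. \<Sum>t\<in>B. (a s * b t) * (s * t))"
    unfolding xa yb sum_product by (simp add: ac_simps)
  also have "\<dots> \<in> span_over K {s * t | s t. s \<in> S \<and> t \<in> T}"
  proof (rule span_over_sum, rule span_over_sum, rule span_over_smult)
    fix s t assume st: "s \<in> A" "t \<in> B"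
    show "a s * b t \<in> K" using st A(3) B(3) subfield_mult[OF K] by blast
    have "s * t \<in> {s * t | s t. s \<in> S \<and> t \<in> T}" using st A(2) B(2) by blast
    then show "s * t \<in> span_over K {s * t | s t. s \<in> S \<and> t \<in> T}"
      using span_over_superset[of "{s * t | s t. s \<in> S \<and> t \<in> T}"] by blast
  qed
  finally show ?thesis .
qed

lemma lin_indep_over_insert:
  assumes "s \<notin> S"
  shows "lin_indep_over K (insert s S) \<longleftrightarrow> lin_indep_over K S \<and> s \<notin> span_over K S"
proof -
  have "lin_indep_over K (insert s S) \<Longrightarrow> lin_indep_over K S"
    using subset_li_is_li[of "insert s S" S] by (auto simp: lin_dep_complex_module)
  then show ?thesis
    using lin_dep_iff_in_span[of S s] assms
    by (auto simp: lin_dep_complex_module span_complex_module)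
qed

lemma card_le_if_lin_indep_over:
  assumes "finite S" "finite T" "T \<subseteq> span_over K S" "lin_indep_over K T"
  shows "card T \<le> card S"
proof -
  obtain C :: "complex set" where "int (card C) \<le> int (card S) - int (card T)"
    using replacement[of T S] assms
    by (auto simp: span_complex_module lin_dep_complex_module)
  then show ?thesis by linarith
qed

lemma finite_basis_of_span_over:
  assumes S: "finite S"
  shows "\<exists>B\<subseteq>S. lin_indep_over K B \<and> span_over K B = span_over K S"
proof -
  let ?I = "{B. B \<subseteq> S \<and> lin_indep_over K B}"
  have "finite ?I" using S by (rule rev_finite_subset[OF finite_Pow_iff[THEN iffD2]]) blast
  moreover have "{} \<in> ?I" by (simp add: lin_indep_over_def)
  ultimately obtain B where B: "B \<subseteq> S" "lin_indep_over K B"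
    and max: "\<And>B'. B' \<in> ?I \<Longrightarrow> B \<subseteq> B' \<Longrightarrow> B = B'"
    using finite_has_maximal2[of ?I "{}"] by (metis (no_types, lifting) mem_Collect_eq)
  have "S \<subseteq> span_over K B"
  proof
    fix s assume s: "s \<in> S"
    show "s \<in> span_over K B"
    proof (rule ccontr)
      assume s_notin: "s \<notin> span_over K B"
      have "s \<notin> B" using s_notin span_over_superset[of B] by blast
      then have "insert s B \<in> ?I" using B s s_notin lin_indep_over_insert by simp
      then have "B = insert s B" by (rule max) blast
      then show False using s_notin span_over_superset[of B] by blast
    qed
  qed
  then have "span_over K S \<subseteq> span_over K B" by (rule span_over_subset)
  then show ?thesis using B span_over_mono[OF B(1)] by blast
qed
end

section \<open>Polynomials over K and algebraic elements\<close>

definition poly_over :: "complex set \<Rightarrow> complex poly \<Rightarrow> bool" where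
  "poly_over K p \<longleftrightarrow> (\<forall>i. coeff p i \<in> K)"

lemma poly_over_pCons: "poly_over K (pCons a p) \<longleftrightarrow> a \<in> K \<and> poly_over K p"
  unfolding poly_over_def by (metis coeff_pCons_0 coeff_pCons_Suc not0_implies_Suc)

lemma poly_over_0: "subfield K \<Longrightarrow> poly_over K 0"
  by (simp add: poly_over_def subfield_zero)

lemma poly_over_monom: "subfield K \<Longrightarrow> c \<in> K \<Longrightarrow> poly_over K (monom c i)"
  by (simp add: poly_over_def subfield_zero)

lemma poly_over_add: "subfield K \<Longrightarrow> poly_over K p \<Longrightarrow> poly_over K q \<Longrightarrow> poly_over K (p + q)"
  by (simp add: poly_over_def subfield_add)

lemma poly_over_uminus: "subfield K \<Longrightarrow> poly_over K p \<Longrightarrow> poly_over K (- p)"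
  by (simp add: poly_over_def subfield_uminus)

lemma poly_over_1: "subfield K \<Longrightarrow> poly_over K 1"
  by (simp add: poly_over_def coeff_1 subfield_zero subfield_one)

lemma poly_over_mult:
  assumes K: "subfield K" and "poly_over K p" "poly_over K q"
  shows "poly_over K (p * q)"
  using assms(2,3) unfolding poly_over_def coeff_mult
  by (intro allI subfield_sum[OF K] subfield_mult[OF K]) auto

lemma poly_over_sum:
  assumes K: "subfield K" and f: "\<And>i. i \<in> I \<Longrightarrow> poly_over K (f i)"
  shows "poly_over K (sum f I)"
  using f
  by (induction I rule: infinite_finite_induct)
    (simp_all add: poly_over_0[OF K] poly_over_add[OF K])

lemma poly_over_prod:
  assumes K: "subfield K" and f: "\<And>i. i \<in> I \<Longrightarrow> poly_over K (f i)"
  shows "poly_over K (prod f I)"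
  using f
  by (induction I rule: infinite_finite_induct)
    (simp_all add: poly_over_1[OF K] poly_over_mult[OF K])

lemma poly_mem_if_poly_over:
  assumes K: "subfield K" and KL: "K \<subseteq> L"
    and add: "\<And>x y. x \<in> L \<Longrightarrow> y \<in> L \<Longrightarrow> x + y \<in> L"
    and mult: "\<And>x y. x \<in> L \<Longrightarrow> y \<in> L \<Longrightarrow> x * y \<in> L"
    and x: "x \<in> L" and p: "poly_over K p"
  shows "poly p x \<in> L"
  using p
proof (induction p rule: pCons_induct)
  case 0
  then show ?case using KL subfield_zero[OF K] by auto
next
  case (pCons a p)
  then show ?case using KL x by (auto simp: poly_over_pCons intro!: add mult)
qed

lemma inverse_mem_if_root:
  assumes K: "subfield K" and KL: "K \<subseteq> L"
    and add: "\<And>x y. x \<in> L \<Longrightarrow> y \<in> L \<Longrightarrow> x + y \<in> L"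
    and mult: "\<And>x y. x \<in> L \<Longrightarrow> y \<in> L \<Longrightarrow> x * y \<in> L"
    and x: "x \<in> L" "x \<noteq> 0" and p: "p \<noteq> 0" "poly_over K p" "poly p x = 0"
  shows "inverse x \<in> L"
  using p
proof (induction p rule: pCons_induct)
  case (pCons a p)
  have a: "a \<in> K" and p: "poly_over K p" using pCons.prems(2) by (simp_all add: poly_over_pCons)
  have root: "a + x * poly p x = 0" using pCons.prems(3) by simp
  show ?case
  proof (cases "a = 0")
    case True
    then have "p \<noteq> 0" "poly p x = 0" using pCons.prems(1) root x(2) by auto
    then show ?thesis using pCons.IH p by blast
  next
    case False
    have "x * poly p x = - a" using root by (simp add: eq_neg_iff_add_eq_0 add.commute)
    then have "x * (poly p x * - inverse a) = 1" using False by (simp add: mult.assoc[symmetric])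
    then have "inverse x = poly p x * - inverse a" by (rule inverse_unique)
    also have "\<dots> \<in> L"
    proof (rule mult)
      show "poly p x \<in> L" by (rule poly_mem_if_poly_over[OF K KL add mult x(1) p])
      show "- inverse a \<in> L" using KL subfield_uminus[OF K subfield_inverse[OF K a]] by blast
    qed
    finally show ?thesis .
  qed
qed simp

lemma algebraic_if_powers_in_span_over:
  assumes K: "subfield K" and S: "finite S" and pow: "\<And>i. x ^ i \<in> span_over K S"
  shows "\<exists>p. p \<noteq> 0 \<and> poly_over K p \<and> poly p x = 0"
proof (cases "inj_on (\<lambda>i. x ^ i) {..card S}")
  case False
  then obtain i j where ij: "i \<noteq> j" "x ^ i = x ^ j" unfolding inj_on_def by blast
  define p where "p = monom 1 i + - monom (1::complex) j"
  have "coeff p i = 1" using ij(1) by (simp add: p_def)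
  then have "p \<noteq> 0" by auto
  moreover have "poly_over K p"
    unfolding p_def using K by (intro poly_over_add poly_over_uminus poly_over_monom subfield_one)
  moreover have "poly p x = 0" using ij(2) by (simp add: p_def poly_monom)
  ultimately show ?thesis by blast
next
  case True
  define X where "X = (\<lambda>i. x ^ i) ` {..card S}"
  have X: "finite X" "X \<subseteq> span_over K S" using pow by (auto simp: X_def)
  have "card X = Suc (card S)" unfolding X_def using card_image[OF True] by simp
  then have "\<not> lin_indep_over K X" using card_le_if_lin_indep_over[OF K S X] by linarith
  then obtain U c u where U: "finite U" "U \<subseteq> X" "\<forall>t\<in>U. c t \<in> K" "(\<Sum>t\<in>U. c t * t) = 0"
    and u: "u \<in> U" "c u \<noteq> 0"
    unfolding lin_indep_over_def by blast
  define e where "e i = (if x ^ i \<in> U then c (x ^ i) else 0)" for i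
  define p where "p = (\<Sum>i\<le>card S. monom (e i) i)"
  obtain i where i: "i \<le> card S" "u = x ^ i" using u(1) U(2) unfolding X_def by blast
  have "coeff p i = e i" unfolding p_def coeff_sum using i(1) by (simp add: coeff_monom)
  then have "p \<noteq> 0" using u i(2) by (auto simp: e_def)
  moreover have "poly_over K p"
    unfolding p_def e_def using U(3)
    by (intro poly_over_sum[OF K] poly_over_monom[OF K]) (simp add: subfield_zero[OF K])
  moreover have "poly p x = 0"
  proof -
    have "poly p x = (\<Sum>i\<le>card S. e i * x ^ i)" by (simp add: p_def poly_sum poly_monom)
    also have "\<dots> = (\<Sum>t\<in>X. (if t \<in> U then c t else 0) * t)"
      unfolding X_def e_def by (simp add: sum.reindex[OF True])
    also have "\<dots> = (\<Sum>t\<in>X. if t \<in> U then c t * t else 0)" by (rule sum.cong) auto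
    also have "\<dots> = (\<Sum>t\<in>X \<inter> U. c t * t)" by (simp add: sum.inter_restrict X(1))
    also have "X \<inter> U = U" using U(2) by blast
    finally show ?thesis using U(4) by simp
  qed
  ultimately show ?thesis by blast
qed

lemma subfield_span_over:
  assumes K: "subfield K" and S: "finite S" and one: "1 \<in> span_over K S"
    and mult: "\<And>x y. x \<in> span_over K S \<Longrightarrow> y \<in> span_over K S \<Longrightarrow> x * y \<in> span_over K S"
  shows "subfield (span_over K S)"
proof -
  let ?L = "span_over K S"
  have KL: "K \<subseteq> ?L"
  proof
    fix a assume "a \<in> K"
    then show "a \<in> ?L" using span_over_smult[OF K _ one] by (metis mult.right_neutral)
  qed
  have add: "x + y \<in> ?L" if "x \<in> ?L" "y \<in> ?L" for x y using span_over_add[OF K that] .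
  have inv: "inverse x \<in> ?L" if x: "x \<in> ?L" "x \<noteq> 0" for x
  proof -
    have "x ^ i \<in> ?L" for i by (induction i) (use one mult x in auto)
    then obtain p where "p \<noteq> 0" "poly_over K p" "poly p x = 0"
      using algebraic_if_powers_in_span_over[OF K S] by blast
    then show ?thesis using inverse_mem_if_root[OF K KL add mult x] by blast
  qed
  show ?thesis
    unfolding subfield_def using span_over_zero[OF K] one add mult span_over_uminus[OF K] inv
    by (intro conjI ballI impI) simp_all
qed

lemma finite_ext_span_over:
  assumes K: "subfield K" and S: "finite S" and one: "1 \<in> span_over K S"
    and mult: "\<And>x y. x \<in> span_over K S \<Longrightarrow> y \<in> span_over K S \<Longrightarrow> x * y \<in> span_over K S"
  shows "finite_ext K (span_over K S)" and "ext_degree K (span_over K S) \<le> card S"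
proof -
  let ?L = "span_over K S"
  obtain B where B: "B \<subseteq> S" "lin_indep_over K B" "span_over K B = ?L"
    using finite_basis_of_span_over[OF K S] by blast
  have "B \<subseteq> ?L" using span_over_superset[OF K, of B] B(3) by simp
  then have basis: "\<exists>B. finite B \<and> is_basis_over K ?L B"
    using B finite_subset[OF B(1) S] unfolding is_basis_over_def by blast
  have "K \<subseteq> ?L" using span_over_smult[OF K _ one] by (metis mult.right_neutral subsetI)
  then show "finite_ext K ?L"
    unfolding finite_ext_def using K subfield_span_over[OF assms] basis by blast
  define B' where "B' = (SOME B. finite B \<and> is_basis_over K ?L B)"
  have "finite B' \<and> is_basis_over K ?L B'" unfolding B'_def by (rule someI_ex[OF basis])
  then have "card B' \<le> card S"
    using card_le_if_lin_indep_over[OF K S] unfolding is_basis_over_def by blast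
  then show "ext_degree K ?L \<le> card S" unfolding ext_degree_def B'_def .
qed

lemma power_mem_span_over_if_root:
  assumes K: "subfield K" and p: "poly_over K p" "degree p = d" "coeff p d = 1"
    and root: "poly p x = 0"
  shows "x ^ j \<in> span_over K ((\<lambda>i. x ^ i) ` {..<d})"
proof (induction j rule: less_induct)
  case (less j)
  show ?case
  proof (cases "j < d")
    case True
    then show ?thesis using span_over_superset[OF K, of "(\<lambda>i. x ^ i) ` {..<d}"] by blast
  next
    case False
    have "0 = (\<Sum>i\<le>d. coeff p i * x ^ i)" using root unfolding poly_altdef p(2) by simp
    also have "\<dots> = (\<Sum>i<d. coeff p i * x ^ i) + x ^ d"
      using p(3) by (simp add: lessThan_Suc_atMost[symmetric])
    finally have "x ^ d = - (\<Sum>i<d. coeff p i * x ^ i)"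
      by (simp add: eq_neg_iff_add_eq_0 add.commute)
    have "x ^ j = x ^ (j - d) * x ^ d" using False by (simp add: power_add[symmetric])
    also have "\<dots> = - (\<Sum>i<d. coeff p i * x ^ (i + (j - d)))"
      unfolding \<open>x ^ d = _\<close> by (simp add: sum_distrib_left power_add mult_ac)
    also have "\<dots> \<in> span_over K ((\<lambda>i. x ^ i) ` {..<d})"
      using less.IH False p(1) unfolding poly_over_def
      by (intro span_over_uminus[OF K] span_over_sum[OF K] span_over_smult[OF K]) auto
    finally show ?thesis .
  qed
qed

lemma finite_ext_containing_roots:
  assumes K: "subfield K" and p: "poly_over K p" "degree p = d" "coeff p d = 1"
    and l: "poly p l = 0" and m: "poly p m = 0"
  shows "\<exists>L. finite_ext K L \<and> ext_degree K L \<le> d ^ 2 \<and> l \<in> L \<and> m \<in> L"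
proof -
  define S where "S = (\<lambda>(i, j). l ^ i * m ^ j) ` ({..<d} \<times> {..<d})"
  have S: "finite S" "card S \<le> d ^ 2"
    unfolding S_def using card_image_le[of "{..<d} \<times> {..<d}"] by (auto simp: power2_eq_square)
  have lm: "l ^ a * m ^ b \<in> span_over K S" for a b
  proof -
    have "{s * t | s t. s \<in> (\<lambda>i. l ^ i) ` {..<d} \<and> t \<in> (\<lambda>j. m ^ j) ` {..<d}} = S"
      unfolding S_def by auto
    then show ?thesis
      using span_over_mult[OF K power_mem_span_over_if_root[OF K p l]
          power_mem_span_over_if_root[OF K p m]]
      by simp
  qed
  have mult: "x * y \<in> span_over K S" if "x \<in> span_over K S" "y \<in> span_over K S" for x y
  proof -
    have "{s * t | s t. s \<in> S \<and> t \<in> S} \<subseteq> span_over K S"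
    proof safe
      fix s t assume "s \<in> S" "t \<in> S"
      then obtain i j i' j' where "s = l ^ i * m ^ j" "t = l ^ i' * m ^ j'" unfolding S_def by auto
      then have "s * t = l ^ (i + i') * m ^ (j + j')" by (simp add: power_add mult_ac)
      then show "s * t \<in> span_over K S" using lm by simp
    qed
    then show ?thesis using span_over_mult[OF K that] span_over_subset[OF K] by (meson subsetD)
  qed
  have one: "1 \<in> span_over K S" using lm[of 0 0] by simp
  show ?thesis
    using finite_ext_span_over[OF K S(1) one mult] S(2) lm[of 1 0] lm[of 0 1]
    by (intro exI[of _ "span_over K S"]) auto
qed

section \<open>A K-linear retraction of the complex numbers onto K\<close>

lemma hamel_basis_containing_1:
  assumes K: "subfield K"
  obtains H where "1 \<in> H" "lin_indep_over K H" "\<And>x. x \<in> span_over K H"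
proof -
  let ?A = "{H. 1 \<in> H \<and> lin_indep_over K H}"
  have "\<exists>M\<in>?A. \<forall>H\<in>?A. M \<subseteq> H \<longrightarrow> H = M"
  proof (rule subset_Zorn_nonempty)
    have "span_over K {} = {0}" by (auto simp: span_over_def)
    then have "lin_indep_over K {1}"
      using lin_indep_over_insert[OF K, of 1 "{}"] by (simp add: lin_indep_over_def)
    then show "?A \<noteq> {}" by blast
  next
    fix C assume C: "C \<noteq> {}" "subset.chain ?A C"
    have CA: "C \<subseteq> ?A" using C(2) unfolding subset_chain_def by blast
    have "lin_indep_over K (\<Union>C)"
      unfolding lin_indep_over_def
    proof (intro allI impI)
      fix T c assume T: "finite T \<and> T \<subseteq> \<Union>C \<and> (\<forall>t\<in>T. c t \<in> K) \<and> (\<Sum>t\<in>T. c t * t) = 0"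
      obtain H where "H \<in> C" "T \<subseteq> H"
        using finite_subset_Union_chain[of T C ?A] T C by blast
      moreover have "lin_indep_over K H" using \<open>H \<in> C\<close> CA by blast
      ultimately show "\<forall>t\<in>T. c t = 0" using T unfolding lin_indep_over_def by blast
    qed
    moreover have "1 \<in> \<Union>C" using C(1) CA by blast
    ultimately show "\<Union>C \<in> ?A" by blast
  qed
  then obtain H where H: "1 \<in> H" "lin_indep_over K H" and max: "\<forall>H'\<in>?A. H \<subseteq> H' \<longrightarrow> H' = H"
    by blast
  have "x \<in> span_over K H" for x
  proof (rule ccontr)
    assume x: "x \<notin> span_over K H"
    then have "x \<notin> H" using span_over_superset[OF K, of H] by blast
    then have "insert x H \<in> ?A" using H x lin_indep_over_insert[OF K] by simp
    then have "insert x H = H" using max by blast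
    then show False using \<open>x \<notin> H\<close> by blast
  qed
  then show thesis using that H by blast
qed

lemma K_linear_retraction_exists:
  assumes K: "subfield K"
  obtains \<pi> where "additive \<pi>" "\<And>a x. a \<in> K \<Longrightarrow> \<pi> (a * x) = a * \<pi> x"
    "\<And>a. a \<in> K \<Longrightarrow> \<pi> a = a" "\<And>x. \<pi> x \<in> K"
proof -
  obtain H where H: "1 \<in> H" "lin_indep_over K H" "\<And>x. x \<in> span_over K H"
    using hamel_basis_containing_1[OF K] by blast
  \<comment> \<open>\<open>\<complex>\<close> is the direct sum of \<open>K\<close> (spanned by \<open>1\<close>) and \<open>W\<close>; \<open>\<pi>\<close> projects onto \<open>K\<close>.\<close>
  define W where "W = span_over K (H - {1})"
  have H_eq: "insert 1 (H - {1}) = H" using H(1) by blast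
  have "1 \<notin> W"
    using H(2) lin_indep_over_insert[OF K, of 1 "H - {1}"] unfolding H_eq W_def by simp
  have unique: "a = b" if ab: "a \<in> K" "b \<in> K" "x - a \<in> W" "x - b \<in> W" for x a b
  proof (rule ccontr)
    assume "a \<noteq> b"
    have "(x - b) - (x - a) \<in> W" using ab(3,4) span_over_diff[OF K] unfolding W_def by blast
    then have "inverse (a - b) * (a - b) \<in> W"
      using span_over_smult[OF K subfield_inverse[OF K subfield_diff[OF K ab(1,2)]]]
      unfolding W_def by simp
    then show False using \<open>a \<noteq> b\<close> \<open>1 \<notin> W\<close> by simp
  qed
  have exists: "\<exists>a\<in>K. x - a \<in> W" for x
    using H(3)[of x] span_over_insert[OF K, of x 1 "H - {1}"] unfolding H_eq W_def by simp
  define \<pi> where "\<pi> x = (THE a. a \<in> K \<and> x - a \<in> W)" for x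
  have \<pi>: "\<pi> x \<in> K" "x - \<pi> x \<in> W" for x
    using theI'[of "\<lambda>a. a \<in> K \<and> x - a \<in> W"] exists[of x] unique[of _ _ x] unfolding \<pi>_def by blast+
  have \<pi>_eqI: "\<pi> x = a" if "a \<in> K" "x - a \<in> W" for x a
    using unique[OF \<pi>(1) that(1) \<pi>(2) that(2)] .
  show thesis
  proof
    show "additive \<pi>"
    proof
      fix x y
      have "(x + y) - (\<pi> x + \<pi> y) = (x - \<pi> x) + (y - \<pi> y)" by simp
      then have "(x + y) - (\<pi> x + \<pi> y) \<in> W"
        using span_over_add[OF K] \<pi>(2) unfolding W_def by metis
      then show "\<pi> (x + y) = \<pi> x + \<pi> y" by (rule \<pi>_eqI[OF subfield_add[OF K \<pi>(1) \<pi>(1)]])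
    qed
  next
    fix a x assume a: "a \<in> K"
    have "a * x - a * \<pi> x = a * (x - \<pi> x)" by (simp add: right_diff_distrib)
    then have "a * x - a * \<pi> x \<in> W"
      using span_over_smult[OF K a] \<pi>(2) unfolding W_def by metis
    then show "\<pi> (a * x) = a * \<pi> x" by (rule \<pi>_eqI[OF subfield_mult[OF K a \<pi>(1)]])
  next
    fix a assume "a \<in> K"
    then show "\<pi> a = a" by (intro \<pi>_eqI) (simp_all add: W_def span_over_zero[OF K])
  qed (rule \<pi>(1))
qed

section \<open>Polynomials of a matrix applied to a vector\<close>

text \<open>\<open>poly_mat_vec A p v\<close> is \<open>p(A) v\<close>, evaluated by Horner's rule.\<close>
definition poly_mat_vec :: "'a :: comm_ring_1 mat \<Rightarrow> 'a poly \<Rightarrow> 'a vec \<Rightarrow> 'a vec" where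
  "poly_mat_vec A p v = fold_coeffs (\<lambda>a w. a \<cdot>\<^sub>v v + A *\<^sub>v w) p (0\<^sub>v (dim_vec v))"

lemma poly_mat_vec_0 [simp]: "poly_mat_vec A 0 v = 0\<^sub>v (dim_vec v)"
  unfolding poly_mat_vec_def by simp

context
  fixes A :: "'a :: comm_ring_1 mat" and n :: nat
  assumes A: "A \<in> carrier_mat n n"
begin

lemma poly_mat_vec_pCons:
  assumes v: "v \<in> carrier_vec n"
  shows "poly_mat_vec A (pCons a p) v = a \<cdot>\<^sub>v v + A *\<^sub>v poly_mat_vec A p v"
proof (cases "p = 0 \<and> a = 0")
  case True
  then show ?thesis
    unfolding poly_mat_vec_def using A v by (intro eq_vecI) (auto simp: scalar_prod_def)
next
  case False
  then show ?thesis unfolding poly_mat_vec_def by (cases "p = 0") auto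
qed

lemma poly_mat_vec_carrier: "v \<in> carrier_vec n \<Longrightarrow> poly_mat_vec A p v \<in> carrier_vec n"
  by (induction p rule: pCons_induct) (use A in \<open>auto simp: poly_mat_vec_pCons\<close>)

lemma poly_mat_vec_zero: "poly_mat_vec A p (0\<^sub>v n) = 0\<^sub>v n"
proof (induction p rule: pCons_induct)
  case (pCons a p)
  then show ?case using A by (intro eq_vecI) (auto simp: poly_mat_vec_pCons scalar_prod_def)
qed simp

lemma poly_mat_vec_add:
  assumes v: "v \<in> carrier_vec n"
  shows "poly_mat_vec A (p + q) v = poly_mat_vec A p v + poly_mat_vec A q v"
proof (induction p arbitrary: q rule: pCons_induct)
  case 0
  then show ?case using poly_mat_vec_carrier[OF v] v by simp
next
  case (pCons a p)
  obtain b q' where q: "q = pCons b q'" by (cases q) auto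
  have "poly_mat_vec A (p + q') v \<in> carrier_vec n" "poly_mat_vec A p v \<in> carrier_vec n"
    "poly_mat_vec A q' v \<in> carrier_vec n"
    using poly_mat_vec_carrier[OF v] by auto
  then show ?case unfolding q poly_mat_vec_pCons[OF v] add_pCons pCons.IH
    using A v by (intro eq_vecI) (auto simp: mult_add_distrib_mat_vec algebra_simps)
qed

lemma poly_mat_vec_smult:
  assumes v: "v \<in> carrier_vec n"
  shows "poly_mat_vec A (smult c p) v = c \<cdot>\<^sub>v poly_mat_vec A p v"
proof (induction p rule: pCons_induct)
  case 0
  then show ?case using v by auto
next
  case (pCons a p)
  have "poly_mat_vec A p v \<in> carrier_vec n" using poly_mat_vec_carrier[OF v] .
  then show ?case unfolding smult_pCons poly_mat_vec_pCons[OF v] pCons.IH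
    using A v by (intro eq_vecI) (auto simp: mult_mat_vec algebra_simps)
qed

lemma poly_mat_vec_mult:
  assumes v: "v \<in> carrier_vec n"
  shows "poly_mat_vec A (p * q) v = poly_mat_vec A p (poly_mat_vec A q v)"
proof (induction p rule: pCons_induct)
  case 0
  then show ?case using poly_mat_vec_carrier[OF v, of q] v by simp
next
  case (pCons a p)
  have qv: "poly_mat_vec A q v \<in> carrier_vec n" "poly_mat_vec A (p * q) v \<in> carrier_vec n"
    using poly_mat_vec_carrier[OF v] by auto
  have "poly_mat_vec A (pCons a p * q) v = poly_mat_vec A (smult a q + pCons 0 (p * q)) v" by simp
  also have "\<dots> = a \<cdot>\<^sub>v poly_mat_vec A q v + (0 \<cdot>\<^sub>v v + A *\<^sub>v poly_mat_vec A (p * q) v)"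
    unfolding poly_mat_vec_add[OF v] poly_mat_vec_smult[OF v] poly_mat_vec_pCons[OF v] ..
  also have "\<dots> = a \<cdot>\<^sub>v poly_mat_vec A q v + A *\<^sub>v poly_mat_vec A p (poly_mat_vec A q v)"
    unfolding pCons.IH using qv A v by (intro eq_vecI) auto
  also have "\<dots> = poly_mat_vec A (pCons a p) (poly_mat_vec A q v)"
    unfolding poly_mat_vec_pCons[OF qv(1)] ..
  finally show ?case .
qed

lemma poly_mat_vec_const:
  assumes v: "v \<in> carrier_vec n"
  shows "poly_mat_vec A [:c:] v = c \<cdot>\<^sub>v v"
proof -
  have "A *\<^sub>v 0\<^sub>v n = 0\<^sub>v n" using A by (intro eq_vecI) (auto simp: scalar_prod_def)
  then show ?thesis using poly_mat_vec_pCons[OF v, of c 0] v by simp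
qed

lemma poly_mat_vec_linear:
  assumes v: "v \<in> carrier_vec n"
  shows "poly_mat_vec A [:- b, 1:] v = A *\<^sub>v v - b \<cdot>\<^sub>v v"
proof -
  have "poly_mat_vec A [:- b, 1:] v = (- b) \<cdot>\<^sub>v v + A *\<^sub>v poly_mat_vec A [:1:] v"
    by (rule poly_mat_vec_pCons[OF v])
  also have "poly_mat_vec A [:1:] v = 1 \<cdot>\<^sub>v v" by (rule poly_mat_vec_const[OF v])
  finally show ?thesis using A v by (intro eq_vecI) auto
qed

lemma poly_mat_vec_monom:
  "v \<in> carrier_vec n \<Longrightarrow> poly_mat_vec A (monom 1 k) v = (A ^\<^sub>m k) *\<^sub>v v"
proof (induction k arbitrary: v)
  case 0
  then show ?case using A by (simp add: monom_0 poly_mat_vec_const)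
next
  case (Suc k v)
  have x: "poly_mat_vec A [:0, 1:] v = A *\<^sub>v v"
    using poly_mat_vec_linear[OF Suc.prems, of 0] A Suc.prems by (intro eq_vecI) auto
  have "monom (1::'a) (Suc k) = monom 1 k * [:0, 1:]" by (simp add: monom_Suc mult_pCons_right)
  then have "poly_mat_vec A (monom 1 (Suc k)) v = poly_mat_vec A (monom 1 k) (A *\<^sub>v v)"
    by (simp only: poly_mat_vec_mult[OF Suc.prems] x)
  also have "\<dots> = (A ^\<^sub>m k) *\<^sub>v (A *\<^sub>v v)" using Suc.IH A Suc.prems by simp
  also have "\<dots> = (A ^\<^sub>m Suc k) *\<^sub>v v"
    using assoc_mult_mat_vec[of "A ^\<^sub>m k" n n A n v] A Suc.prems by simp
  finally show ?case .
qed


lemma poly_mat_vec_sum_index: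
  assumes w: "w \<in> carrier_vec n" and r: "r < n"
  shows "poly_mat_vec A (sum f I) w $ r = (\<Sum>i\<in>I. poly_mat_vec A (f i) w $ r)"
proof (induction I rule: infinite_finite_induct)
  case (insert x F)
  then show ?case
    using poly_mat_vec_carrier[OF w, of "f x"] poly_mat_vec_carrier[OF w, of "sum f F"] r
    by (simp add: poly_mat_vec_add[OF w])
qed (use w r in simp_all)

lemma poly_mat_vec_monom_index:
  assumes w: "w \<in> carrier_vec n" and r: "r < n"
  shows "poly_mat_vec A (monom c i) w $ r = c * ((A ^\<^sub>m i) *\<^sub>v w) $ r"
proof -
  have "monom c i = smult c (monom 1 i)" by (simp add: smult_monom)
  then show ?thesis
    using A w r by (simp add: poly_mat_vec_smult[OF w] poly_mat_vec_monom[OF w])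
qed

end

lemma poly_mat_vec_pcompose_monom:
  assumes A: "A \<in> carrier_mat n n" and v: "v \<in> carrier_vec n"
  shows "poly_mat_vec A (p \<circ>\<^sub>p monom 1 k) v = poly_mat_vec (A ^\<^sub>m k) p v"
proof (induction p rule: pCons_induct)
  case (pCons a p)
  have Ak: "A ^\<^sub>m k \<in> carrier_mat n n" using A by simp
  have pv: "poly_mat_vec A (p \<circ>\<^sub>p monom 1 k) v \<in> carrier_vec n" using poly_mat_vec_carrier[OF A v] .
  have "poly_mat_vec A (pCons a p \<circ>\<^sub>p monom 1 k) v
      = poly_mat_vec A ([:a:] + monom 1 k * (p \<circ>\<^sub>p monom 1 k)) v"
    by simp
  also have "\<dots> = a \<cdot>\<^sub>v v + (A ^\<^sub>m k) *\<^sub>v poly_mat_vec A (p \<circ>\<^sub>p monom 1 k) v"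
    unfolding poly_mat_vec_add[OF A v] poly_mat_vec_const[OF A v] poly_mat_vec_mult[OF A v]
      poly_mat_vec_monom[OF A pv] ..
  also have "\<dots> = poly_mat_vec (A ^\<^sub>m k) (pCons a p) v"
    unfolding pCons.IH poly_mat_vec_pCons[OF Ak v] ..
  finally show ?case .
qed simp

section \<open>Matrices and vectors with entries in K\<close>

lemma entries_in_mult:
  assumes K: "subfield K" and X: "X \<in> carrier_mat d d" "entries_in K X"
    and Y: "Y \<in> carrier_mat d d" "entries_in K Y"
  shows "entries_in K (X * Y)"
  unfolding entries_in_def
proof (intro allI impI)
  fix i j assume "i < dim_row (X * Y)" "j < dim_col (X * Y)"
  then show "(X * Y) $$ (i, j) \<in> K"
    using X Y unfolding entries_in_def
    by (auto simp: scalar_prod_def intro!: subfield_sum[OF K] subfield_mult[OF K])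
qed

lemma entries_in_pow:
  assumes K: "subfield K" and A: "A \<in> carrier_mat d d" "entries_in K A"
  shows "entries_in K (A ^\<^sub>m k)"
proof (induction k)
  case 0
  then show ?case using A subfield_zero[OF K] subfield_one[OF K] by (auto simp: entries_in_def)
next
  case (Suc k)
  then show ?case using entries_in_mult[OF K _ _ A] A(1) by simp
qed

lemma mult_mat_vec_Kvecs:
  assumes K: "subfield K" and A: "A \<in> carrier_mat d d" "entries_in K A" and v: "v \<in> Kvecs K d"
  shows "A *\<^sub>v v \<in> Kvecs K d"
  using A v unfolding Kvecs_def entries_in_def
  by (auto simp: scalar_prod_def intro!: subfield_sum[OF K] subfield_mult[OF K])

lemma poly_over_char_poly:
  assumes K: "subfield K" and A: "A \<in> carrier_mat d d" "entries_in K A"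
  shows "poly_over K (char_poly A)"
proof -
  let ?M = "char_poly_matrix A"
  have entries: "poly_over K (?M $$ (i, j))" if "i < d" "j < d" for i j
  proof -
    have "?M $$ (i, j) = (if i = j then monom 1 1 else 0) + monom (- A $$ (i, j)) 0"
      using that A unfolding char_poly_matrix_def by (simp add: monom_0 monom_Suc)
    then show ?thesis
      using that A K unfolding entries_in_def
      by (auto intro!: poly_over_add poly_over_monom poly_over_0 subfield_uminus subfield_one)
  qed
  have sign: "poly_over K (of_int (sign p))" for p :: "nat \<Rightarrow> nat"
    using K by (auto simp: sign_def intro!: poly_over_1 poly_over_uminus)
  have "?M \<in> carrier_mat d d" using A(1) by simp
  then have "poly_over K (det ?M)"
    unfolding det_def
    by (auto intro!: poly_over_sum[OF K] poly_over_mult[OF K] poly_over_prod[OF K] sign entries)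
  then show ?thesis unfolding char_poly_def .
qed

lemma poly_mat_vec_mem_invariant_subspace:
  assumes K: "subfield K" and V: "K_subspace K d V" and B: "B \<in> carrier_mat d d"
    and inv: "invariant_under B V" and v: "v \<in> V" and p: "poly_over K p"
  shows "poly_mat_vec B p v \<in> V"
  using p
proof (induction p rule: pCons_induct)
  have vd: "v \<in> carrier_vec d" using V v unfolding K_subspace_def Kvecs_def by auto
  {
    case 0
    then show ?case using V vd unfolding K_subspace_def by simp
  next
    case (pCons a p)
    then have "a \<in> K" "poly_mat_vec B p v \<in> V" by (simp_all add: poly_over_pCons)
    then show ?case
      using V v inv unfolding poly_mat_vec_pCons[OF B vd] K_subspace_def invariant_under_def
      by blast
  }
qed

lemma poly_mat_vec_map_poly_retraction:
  fixes \<pi> :: "complex \<Rightarrow> complex"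
  assumes K: "subfield K" and B: "B \<in> carrier_mat d d" "entries_in K B" and v: "v \<in> Kvecs K d"
    and \<pi>: "additive \<pi>" "\<And>a x. a \<in> K \<Longrightarrow> \<pi> (a * x) = a * \<pi> x"
  shows "i < d \<Longrightarrow> poly_mat_vec B (map_poly \<pi> p) v $ i = \<pi> (poly_mat_vec B p v $ i)"
proof (induction p arbitrary: i rule: pCons_induct)
  interpret additive \<pi> by (rule \<pi>(1))
  have vd: "v \<in> carrier_vec d" and vK: "\<And>i. i < d \<Longrightarrow> v $ i \<in> K" using v unfolding Kvecs_def by auto
  {
    case 0
    then show ?case using vd by (simp add: zero)
  next
    case (pCons a p i)
    let ?u = "poly_mat_vec B p v" and ?u' = "poly_mat_vec B (map_poly \<pi> p) v"
    have u: "?u \<in> carrier_vec d" "?u' \<in> carrier_vec d"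
      using poly_mat_vec_carrier[OF B(1) vd] by auto
    have "map_poly \<pi> (pCons a p) = pCons (\<pi> a) (map_poly \<pi> p)"
      by (rule poly_eqI) (simp add: coeff_map_poly zero coeff_pCons split: nat.split)
    then have "poly_mat_vec B (map_poly \<pi> (pCons a p)) v $ i
        = \<pi> a * v $ i + (\<Sum>l<d. B $$ (i, l) * ?u' $ l)"
      using pCons.prems B(1) vd u by (simp add: poly_mat_vec_pCons[OF B(1) vd] scalar_prod_def
          atLeast0LessThan)
    also have "\<dots> = \<pi> (v $ i * a) + (\<Sum>l<d. \<pi> (B $$ (i, l) * ?u $ l))"
    proof -
      have "\<pi> (v $ i * a) = \<pi> a * v $ i" using \<pi>(2)[OF vK[OF pCons.prems]] by simp
      moreover have "(\<Sum>l<d. \<pi> (B $$ (i, l) * ?u $ l)) = (\<Sum>l<d. B $$ (i, l) * ?u' $ l)"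
        using pCons.IH pCons.prems B \<pi>(2) unfolding entries_in_def by (intro sum.cong) auto
      ultimately show ?thesis by simp
    qed
    also have "\<dots> = \<pi> ((a \<cdot>\<^sub>v v + B *\<^sub>v ?u) $ i)"
      using pCons.prems B(1) vd u
      by (simp add: add sum scalar_prod_def atLeast0LessThan mult.commute)
    finally show ?case by (simp add: poly_mat_vec_pCons[OF B(1) vd])
  }
qed

lemma poly_mat_vec_mem_subspace_if_Kvecs:
  assumes K: "subfield K" and V: "K_subspace K d V"
    and B: "B \<in> carrier_mat d d" "entries_in K B" "invariant_under B V"
    and v: "v \<in> V" and Kv: "poly_mat_vec B p v \<in> Kvecs K d"
  shows "poly_mat_vec B p v \<in> V"
proof -
  obtain \<pi> where \<pi>: "additive \<pi>" "\<And>a x. a \<in> K \<Longrightarrow> \<pi> (a * x) = a * \<pi> x"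
    "\<And>a. a \<in> K \<Longrightarrow> \<pi> a = a" "\<And>x. \<pi> x \<in> K"
    using K_linear_retraction_exists[OF K] by blast
  have vK: "v \<in> Kvecs K d" using V v unfolding K_subspace_def by blast
  then have vd: "v \<in> carrier_vec d" unfolding Kvecs_def by blast
  have "poly_mat_vec B p v = poly_mat_vec B (map_poly \<pi> p) v"
  proof (rule eq_vecI)
    show "dim_vec (poly_mat_vec B p v) = dim_vec (poly_mat_vec B (map_poly \<pi> p) v)"
      using poly_mat_vec_carrier[OF B(1) vd] by (metis carrier_vecD)
    fix i assume "i < dim_vec (poly_mat_vec B (map_poly \<pi> p) v)"
    then have i: "i < d" using poly_mat_vec_carrier[OF B(1) vd] by (metis carrier_vecD)
    then show "poly_mat_vec B p v $ i = poly_mat_vec B (map_poly \<pi> p) v $ i"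
      using poly_mat_vec_map_poly_retraction[OF K B(1,2) vK \<pi>(1,2) i] \<pi>(3) Kv
      unfolding Kvecs_def by simp
  qed
  also have "\<dots> \<in> V"
    using poly_mat_vec_mem_invariant_subspace[OF K V B(1,3) v] \<pi>(4)
    by (simp add: poly_over_def coeff_map_poly additive.zero[OF \<pi>(1)])
  finally show ?thesis .
qed

section \<open>Annihilating polynomials\<close>

lemma vec_set_dependent_if_card_gt:
  fixes X :: "'a :: field vec set"
  assumes X: "finite X" "X \<subseteq> carrier_vec n" and card: "card X > n"
  shows "\<exists>a v. v \<in> X \<and> a v \<noteq> 0 \<and> (\<forall>i<n. (\<Sum>x\<in>X. a x * x $ i) = 0)"
proof -
  interpret vec_space "TYPE('a)" n .
  have "lin_dep X" using li_le_dim(2)[OF fin_dim X(2)] card dim_is_n by fastforce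
  then obtain B a v where B: "finite B" "B \<subseteq> X" "lincomb a B = 0\<^sub>v n" "v \<in> B" "a v \<noteq> 0"
    unfolding lin_dep_def by blast
  define b where "b x = (if x \<in> B then a x else 0)" for x
  have "(\<Sum>x\<in>X. b x * x $ i) = 0" if i: "i < n" for i
  proof -
    have "(\<Sum>x\<in>X. b x * x $ i) = (\<Sum>x\<in>X. if x \<in> B then a x * x $ i else 0)"
      unfolding b_def by (rule sum.cong) auto
    also have "\<dots> = (\<Sum>x\<in>X \<inter> B. a x * x $ i)" using X(1) by (simp add: sum.inter_restrict)
    also have "X \<inter> B = B" using B(2) by blast
    also have "(\<Sum>x\<in>B. a x * x $ i) = lincomb a B $ i"
      using lincomb_index[OF i, of B a] B(2) X(2) by auto
    finally show ?thesis using B(3) i by simp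
  qed
  moreover have "v \<in> X" "b v \<noteq> 0" using B unfolding b_def by auto
  ultimately show ?thesis by blast
qed

lemma poly_mat_vec_annihilator_exists:
  fixes A :: "'a :: field mat"
  assumes A: "A \<in> carrier_mat n n" and w: "w \<in> carrier_vec n"
  shows "\<exists>p. p \<noteq> 0 \<and> poly_mat_vec A p w = 0\<^sub>v n"
proof (cases "inj_on (\<lambda>i. (A ^\<^sub>m i) *\<^sub>v w) {..n}")
  case False
  then obtain i j where ij: "i \<noteq> j" "(A ^\<^sub>m i) *\<^sub>v w = (A ^\<^sub>m j) *\<^sub>v w"
    unfolding inj_on_def by blast
  define p where "p = monom (1::'a) i + smult (- 1) (monom 1 j)"
  have "coeff p i = 1" unfolding p_def using ij(1) by simp
  then have "p \<noteq> 0" by auto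
  moreover have "poly_mat_vec A p w = 0\<^sub>v n"
    unfolding p_def poly_mat_vec_add[OF A w] poly_mat_vec_smult[OF A w]
      poly_mat_vec_monom[OF A w] ij(2)
    using A w by (intro eq_vecI) auto
  ultimately show ?thesis by blast
next
  case True
  define X where "X = (\<lambda>i. (A ^\<^sub>m i) *\<^sub>v w) ` {..n}"
  have X: "finite X" "X \<subseteq> carrier_vec n"
    using mult_mat_vec_carrier[OF pow_carrier_mat[OF A] w] by (auto simp: X_def)
  have "card X > n" unfolding X_def using card_image[OF True] by simp
  then obtain a v where av: "v \<in> X" "a v \<noteq> 0" "\<And>r. r < n \<Longrightarrow> (\<Sum>x\<in>X. a x * x $ r) = 0"
    using vec_set_dependent_if_card_gt[OF X] by blast
  define p where "p = (\<Sum>i\<le>n. monom (a ((A ^\<^sub>m i) *\<^sub>v w)) i)"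
  obtain i where i: "i \<le> n" "v = (A ^\<^sub>m i) *\<^sub>v w" using av(1) unfolding X_def by auto
  have "coeff p i = a v" unfolding p_def coeff_sum using i by (simp add: coeff_monom)
  then have "p \<noteq> 0" using av(2) by auto
  moreover have "poly_mat_vec A p w = 0\<^sub>v n"
  proof (rule eq_vecI)
    show "dim_vec (poly_mat_vec A p w) = dim_vec (0\<^sub>v n)" using poly_mat_vec_carrier[OF A w] by simp
    fix r assume "r < dim_vec (0\<^sub>v n)"
    then have r: "r < n" by simp
    have "poly_mat_vec A p w $ r = (\<Sum>i\<le>n. a ((A ^\<^sub>m i) *\<^sub>v w) * ((A ^\<^sub>m i) *\<^sub>v w) $ r)"
      unfolding p_def poly_mat_vec_sum_index[OF A w r] poly_mat_vec_monom_index[OF A w r] ..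
    also have "\<dots> = (\<Sum>x\<in>X. a x * x $ r)" unfolding X_def by (simp add: sum.reindex[OF True])
    finally show "poly_mat_vec A p w $ r = 0\<^sub>v n $ r" using av(3)[OF r] r by simp
  qed
  ultimately show ?thesis by blast
qed

lemma poly_mat_vec_prod_filter_eigenvalue:
  fixes A :: "'a :: field mat"
  assumes A: "A \<in> carrier_mat n n"
  shows "w \<in> carrier_vec n \<Longrightarrow> poly_mat_vec A (\<Prod>b\<leftarrow>bs. [:- b, 1:]) w = 0\<^sub>v n \<Longrightarrow>
    poly_mat_vec A (\<Prod>b\<leftarrow>filter (eigenvalue A) bs. [:- b, 1:]) w = 0\<^sub>v n"
proof (induction bs arbitrary: w)
  case (Cons b bs w)
  let ?P = "\<Prod>b\<leftarrow>bs. [:- b, 1:]" and ?Q = "\<Prod>b\<leftarrow>filter (eigenvalue A) bs. [:- b, 1:]"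
  have w: "w \<in> carrier_vec n" by (rule Cons.prems(1))
  have comm: "poly_mat_vec A ([:- b, 1:] * p) w = poly_mat_vec A p (poly_mat_vec A [:- b, 1:] w)"
    for p
    using poly_mat_vec_mult[OF A w, of p "[:- b, 1:]"] by (simp add: mult.commute)
  show ?case
  proof (cases "eigenvalue A b")
    case True
    have "poly_mat_vec A ?P (poly_mat_vec A [:- b, 1:] w) = 0\<^sub>v n"
      using Cons.prems(2) comm by simp
    then have "poly_mat_vec A ?Q (poly_mat_vec A [:- b, 1:] w) = 0\<^sub>v n"
      using Cons.IH poly_mat_vec_carrier[OF A w] by blast
    then show ?thesis using True comm by simp
  next
    case False
    \<comment> \<open>Then \<open>A - b\<close> is injective, so the factor \<open>X - b\<close> can be dropped.\<close>
    let ?u = "poly_mat_vec A ?P w"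
    have u: "?u \<in> carrier_vec n" by (rule poly_mat_vec_carrier[OF A w])
    have "poly_mat_vec A [:- b, 1:] ?u = 0\<^sub>v n"
      using Cons.prems(2) unfolding list.map prod_list.Cons poly_mat_vec_mult[OF A w] .
    then have diff: "A *\<^sub>v ?u - b \<cdot>\<^sub>v ?u = 0\<^sub>v n" using poly_mat_vec_linear[OF A u] by simp
    have "A *\<^sub>v ?u = b \<cdot>\<^sub>v ?u"
    proof (rule eq_vecI)
      fix i assume "i < dim_vec (b \<cdot>\<^sub>v ?u)"
      then have "i < n" using u by simp
      then show "(A *\<^sub>v ?u) $ i = (b \<cdot>\<^sub>v ?u) $ i"
        using arg_cong[OF diff, of "\<lambda>x. x $ i"] A u by simp
    qed (use A u in simp)
    then have "?u = 0\<^sub>v n"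
      using False u A unfolding eigenvalue_def eigenvector_def by auto
    then show ?thesis using Cons.IH[OF w] False by simp
  qed
qed simp

lemma eigenvalue_product_annihilates:
  fixes A :: "complex mat"
  assumes A: "A \<in> carrier_mat n n" and w: "w \<in> carrier_vec n"
  obtains cs where "\<forall>c\<in>set cs. eigenvalue A c" "poly_mat_vec A (\<Prod>c\<leftarrow>cs. [:- c, 1:]) w = 0\<^sub>v n"
proof -
  obtain p where p: "p \<noteq> 0" "poly_mat_vec A p w = 0\<^sub>v n"
    using poly_mat_vec_annihilator_exists[OF A w] by blast
  obtain bs where bs: "smult (lead_coeff p) (\<Prod>b\<leftarrow>bs. [:- b, 1:]) = p"
    using fundamental_theorem_algebra_factorized[of p] by blast
  let ?u = "poly_mat_vec A (\<Prod>b\<leftarrow>bs. [:- b, 1:]) w"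
  have lc: "lead_coeff p \<cdot>\<^sub>v ?u = 0\<^sub>v n" using p(2) bs poly_mat_vec_smult[OF A w] by metis
  have u: "?u \<in> carrier_vec n" by (rule poly_mat_vec_carrier[OF A w])
  have "?u = 0\<^sub>v n"
  proof (rule eq_vecI)
    fix i assume "i < dim_vec (0\<^sub>v n)"
    then have "i < n" by simp
    then have "lead_coeff p * ?u $ i = 0" using arg_cong[OF lc, of "\<lambda>x. x $ i"] u by simp
    then show "?u $ i = 0\<^sub>v n $ i" using p(1) \<open>i < n\<close> by simp
  qed (use u in simp)
  then show thesis
    using that[of "filter (eigenvalue A) bs"] poly_mat_vec_prod_filter_eigenvalue[OF A w] by simp
qed

lemma eigenvalue_nonzero_if_left_invertible:
  fixes A :: "'a :: comm_ring_1 mat"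
  assumes A: "A \<in> carrier_mat n n" and B: "B \<in> carrier_mat n n" "B * A = 1\<^sub>m n"
    and c: "eigenvalue A c"
  shows "c \<noteq> 0"
proof
  assume "c = 0"
  obtain u where u: "u \<in> carrier_vec n" "u \<noteq> 0\<^sub>v n" "A *\<^sub>v u = c \<cdot>\<^sub>v u"
    using c A unfolding eigenvalue_def eigenvector_def by auto
  have "u = (B * A) *\<^sub>v u" using B u by simp
  also have "\<dots> = B *\<^sub>v (A *\<^sub>v u)" using assoc_mult_mat_vec[of B n n A n u] A B u(1) by simp
  also have "A *\<^sub>v u = 0\<^sub>v n" using u \<open>c = 0\<close> by (intro eq_vecI) auto
  also have "B *\<^sub>v 0\<^sub>v n = 0\<^sub>v n" using B by (intro eq_vecI) (auto simp: scalar_prod_def)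
  finally show False using u(2) by simp
qed

lemma poly_mat_vec_eq_if_dvd:
  assumes A: "A \<in> carrier_mat n n" and v: "v \<in> carrier_vec n"
    and dvd: "p dvd q - r" and p: "poly_mat_vec A p v = 0\<^sub>v n"
  shows "poly_mat_vec A q v = poly_mat_vec A r v"
proof -
  obtain h where "q - r = p * h" using dvd by (elim dvdE)
  then have "q = r + h * p" by (simp add: algebra_simps)
  then show ?thesis
    using poly_mat_vec_carrier[OF A v, of r] poly_mat_vec_zero[OF A]
    by (simp add: poly_mat_vec_add[OF A v] poly_mat_vec_mult[OF A v] p)
qed

section \<open>Interpolation through a power map\<close>

definition pow_diff_quot :: "'a :: comm_ring_1 \<Rightarrow> nat \<Rightarrow> 'a poly" where
  "pow_diff_quot b k = (\<Sum>i<k. monom (b ^ (k - Suc i)) i)"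

lemma poly_pow_diff_quot: "poly (pow_diff_quot b k) c = (\<Sum>i<k. b ^ (k - Suc i) * c ^ i)"
  unfolding pow_diff_quot_def by (simp add: poly_sum poly_monom)

lemma pcompose_linear_monom:
  fixes b :: "'a :: field_char_0"
  shows "[:- (b ^ k), 1:] \<circ>\<^sub>p monom 1 k = [:- b, 1:] * pow_diff_quot b k"
proof (rule poly_eq_poly_eq_iff[THEN iffD1], rule ext)
  fix x :: 'a
  have "poly ([:- (b ^ k), 1:] \<circ>\<^sub>p monom 1 k) x = x ^ k - b ^ k"
    by (simp add: poly_pcompose poly_monom)
  also have "\<dots> = (x - b) * (\<Sum>i<k. b ^ (k - Suc i) * x ^ i)" by (rule power_diff_sumr2)
  also have "\<dots> = poly ([:- b, 1:] * pow_diff_quot b k) x"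
    by (simp add: poly_pow_diff_quot left_diff_distrib)
  finally show "poly ([:- (b ^ k), 1:] \<circ>\<^sub>p monom 1 k) x = poly ([:- b, 1:] * pow_diff_quot b k) x" .
qed

lemma poly_pow_diff_quot_nonzero:
  fixes b c :: "'a :: field_char_0"
  assumes k: "k > 0" and c: "c \<noteq> 0" and inj: "c ^ k = b ^ k \<Longrightarrow> c = b"
  shows "poly (pow_diff_quot b k) c \<noteq> 0"
proof (cases "c = b")
  case True
  have "poly (pow_diff_quot b k) c = (\<Sum>i<k. c ^ (k - 1))"
    unfolding poly_pow_diff_quot True by (intro sum.cong refl) (simp flip: power_add)
  then show ?thesis using k c by simp
next
  case False
  have "(c - b) * poly (pow_diff_quot b k) c = c ^ k - b ^ k"
    unfolding poly_pow_diff_quot by (rule power_diff_sumr2[symmetric])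
  then show ?thesis using inj False by auto
qed

text \<open>
  Newton-style induction over the interpolation nodes: besides the interpolating polynomial
  \<open>P\<close>, we carry a polynomial \<open>Q\<close> in \<open>X\<^sup>k\<close> that vanishes at all nodes and whose cofactor \<open>T\<close>
  does not vanish at any further admissible node; adding a multiple of \<open>Q\<close> to \<open>P\<close> fixes
  the next node without disturbing the previous ones.
\<close>
lemma pow_interpolation_aux:
  fixes bs :: "'a :: field_char_0 list"
  assumes k: "k > 0"
  shows "(\<forall>b\<in>set bs. b \<noteq> 0) \<Longrightarrow> inj_on (\<lambda>b. b ^ k) (set bs) \<Longrightarrow>
    \<exists>P Q T. (\<Prod>b\<leftarrow>bs. [:- b, 1:]) dvd [:0, 1:] - P \<circ>\<^sub>p monom 1 k \<and>
      Q \<circ>\<^sub>p monom 1 k = (\<Prod>b\<leftarrow>bs. [:- b, 1:]) * T \<and>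
      (\<forall>c. c \<noteq> 0 \<and> (\<forall>b\<in>set bs. c ^ k = b ^ k \<longrightarrow> c = b) \<longrightarrow> poly T c \<noteq> 0)"
proof (induction bs)
  case Nil
  show ?case by (intro exI[of _ 0] exI[of _ 1] exI[of _ 1]) (simp add: pcompose_1)
next
  case (Cons \<beta> bs)
  let ?g = "\<Prod>b\<leftarrow>bs. [:- b, 1:]"
  have "\<forall>b\<in>set bs. b \<noteq> 0" "inj_on (\<lambda>b. b ^ k) (set bs)"
    using Cons.prems by (simp_all add: inj_on_insert)
  then obtain P Q T where PQT: "?g dvd [:0, 1:] - P \<circ>\<^sub>p monom 1 k"
    "Q \<circ>\<^sub>p monom 1 k = ?g * T"
    "\<And>c. c \<noteq> 0 \<Longrightarrow> (\<forall>b\<in>set bs. c ^ k = b ^ k \<longrightarrow> c = b) \<Longrightarrow> poly T c \<noteq> 0"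
    using Cons.IH by blast
  obtain s where s: "[:0, 1:] - P \<circ>\<^sub>p monom 1 k = ?g * s" using PQT(1) by (elim dvdE)
  have "\<beta> \<noteq> 0" "\<forall>b\<in>set bs. \<beta> ^ k = b ^ k \<longrightarrow> \<beta> = b"
    using Cons.prems by (auto simp: inj_on_def)
  then have T\<beta>: "poly T \<beta> \<noteq> 0" by (rule PQT(3))
  define a where "a = poly s \<beta> / poly T \<beta>"
  have "[:0, 1:] - (P + smult a Q) \<circ>\<^sub>p monom 1 k = ?g * (s - smult a T)"
    unfolding pcompose_add pcompose_smult PQT(2) using s by (simp add: algebra_simps)
  moreover have "[:- \<beta>, 1:] dvd s - smult a T"
    unfolding poly_eq_0_iff_dvd[symmetric] a_def using T\<beta> by simp
  ultimately have "[:- \<beta>, 1:] * ?g dvd [:0, 1:] - (P + smult a Q) \<circ>\<^sub>p monom 1 k"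
    by (metis mult.commute mult_dvd_mono dvd_refl)
  then have "(\<Prod>b\<leftarrow>\<beta> # bs. [:- b, 1:]) dvd [:0, 1:] - (P + smult a Q) \<circ>\<^sub>p monom 1 k"
    by (simp only: list.map prod_list.Cons)
  moreover have "([:- (\<beta> ^ k), 1:] * Q) \<circ>\<^sub>p monom 1 k
      = (\<Prod>b\<leftarrow>\<beta> # bs. [:- b, 1:]) * (pow_diff_quot \<beta> k * T)"
    unfolding pcompose_mult pcompose_linear_monom PQT(2) list.map prod_list.Cons
    by (simp only: ac_simps)
  moreover have "poly (pow_diff_quot \<beta> k * T) c \<noteq> 0"
    if "c \<noteq> 0" "\<forall>b\<in>set (\<beta> # bs). c ^ k = b ^ k \<longrightarrow> c = b" for c
    using that PQT(3)[of c] poly_pow_diff_quot_nonzero[OF k, of c \<beta>] by simp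
  ultimately show ?case by blast
qed

lemma pow_interpolation:
  fixes bs :: "'a :: field_char_0 list"
  assumes "k > 0" "\<forall>b\<in>set bs. b \<noteq> 0" "inj_on (\<lambda>b. b ^ k) (set bs)"
  shows "\<exists>P. (\<Prod>b\<leftarrow>bs. [:- b, 1:]) dvd [:0, 1:] - P \<circ>\<^sub>p monom 1 k"
  using pow_interpolation_aux[OF assms] by blast

lemma pcompose_monom_monom:
  "monom (1 :: 'a :: field_char_0) a \<circ>\<^sub>p monom 1 b = monom 1 (b * a)"
  by (rule poly_eq_poly_eq_iff[THEN iffD1], rule ext)
    (simp add: poly_pcompose poly_monom power_mult)

lemma pcompose_dvd_pcompose: "p dvd q \<Longrightarrow> p \<circ>\<^sub>p r dvd q \<circ>\<^sub>p r"
  by (elim dvdE) (simp add: pcompose_mult)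

lemma linear_factors_dvd_pcompose_monom:
  fixes cs :: "'a :: comm_ring_1 list"
  shows "(\<Prod>c\<leftarrow>cs. [:- c, 1:]) dvd (\<Prod>c\<leftarrow>cs. [:- (c ^ N), 1:]) \<circ>\<^sub>p monom 1 N"
proof (induction cs)
  case (Cons c cs)
  have "poly ([:- (c ^ N), 1:] \<circ>\<^sub>p monom 1 N) c = 0" by (simp add: poly_pcompose poly_monom)
  then have "[:- c, 1:] dvd [:- (c ^ N), 1:] \<circ>\<^sub>p monom 1 N" by (simp only: poly_eq_0_iff_dvd)
  then show ?case
    using mult_dvd_mono[OF _ Cons.IH] unfolding list.map prod_list.Cons pcompose_mult by blast
qed simp

lemma pow_as_poly_of_pow:
  fixes cs :: "'a :: field_char_0 list"
  assumes n: "n > 0" and nz: "\<forall>c\<in>set cs. c \<noteq> 0"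
    and inj: "\<And>c c'. c \<in> set cs \<Longrightarrow> c' \<in> set cs \<Longrightarrow> c ^ (N * n) = c' ^ (N * n) \<Longrightarrow> c ^ N = c' ^ N"
  shows "\<exists>Q. (\<Prod>c\<leftarrow>cs. [:- c, 1:]) dvd monom 1 N - Q \<circ>\<^sub>p monom 1 n"
proof -
  let ?bs = "map (\<lambda>c. c ^ N) cs"
  have "\<forall>b\<in>set ?bs. b \<noteq> 0" using nz by simp
  moreover have "inj_on (\<lambda>b. b ^ n) (set ?bs)"
  proof (rule inj_onI)
    fix b b' assume "b \<in> set ?bs" "b' \<in> set ?bs" and eq: "b ^ n = b' ^ n"
    then obtain c c' where "c \<in> set cs" "c' \<in> set cs" "b = c ^ N" "b' = c' ^ N" by auto
    then show "b = b'" using eq inj[of c c'] by (simp add: power_mult)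
  qed
  ultimately obtain P where "(\<Prod>b\<leftarrow>?bs. [:- b, 1:]) dvd [:0, 1:] - P \<circ>\<^sub>p monom 1 n"
    using pow_interpolation[OF n] by blast
  moreover have "(\<Prod>b\<leftarrow>?bs. [:- b, 1:]) = (\<Prod>c\<leftarrow>cs. [:- (c ^ N), 1:])" by (simp add: o_def)
  ultimately have "(\<Prod>c\<leftarrow>cs. [:- (c ^ N), 1:]) \<circ>\<^sub>p monom 1 N
      dvd ([:0, 1:] - P \<circ>\<^sub>p monom 1 n) \<circ>\<^sub>p monom 1 N"
    using pcompose_dvd_pcompose by metis
  also have "([:0, 1:] - P \<circ>\<^sub>p monom 1 n) \<circ>\<^sub>p monom 1 N = monom 1 N - (P \<circ>\<^sub>p monom 1 N) \<circ>\<^sub>p monom 1 n"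
  proof -
    have "(P \<circ>\<^sub>p monom 1 n) \<circ>\<^sub>p monom 1 N = (P \<circ>\<^sub>p monom 1 N) \<circ>\<^sub>p monom 1 n"
      using pcompose_assoc[of P "monom 1 n" "monom 1 N"]
        pcompose_assoc[of P "monom 1 N" "monom 1 n"]
      by (simp add: pcompose_monom_monom mult.commute)
    moreover have "[:0, 1:] \<circ>\<^sub>p monom 1 N = monom (1::'a) N" by (simp add: pcompose_pCons)
    ultimately show ?thesis by (simp add: pcompose_diff)
  qed
  finally show ?thesis using linear_factors_dvd_pcompose_monom dvd_trans by blast
qed

section \<open>Eigenvalues and powers of A\<close>

lemma eigenvalue_pow_eq_if_pow_eq:
  assumes K: "subfield K" and A: "A \<in> carrier_mat d d" "entries_in K A"
    and roots_of_unity: "\<forall>L. finite_ext K L \<and> ext_degree K L \<le> d ^ 2 \<longrightarrow>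
            (\<forall>z\<in>L. root_of_unity z \<longrightarrow> z ^ N0 = 1)"
    and l: "eigenvalue A l" and m: "eigenvalue A m" "m \<noteq> 0"
    and M: "M > 0" and eq: "l ^ M = m ^ M"
  shows "l ^ N0 = m ^ N0"
proof -
  have "poly (char_poly A) l = 0" "poly (char_poly A) m = 0"
    using l m(1) eigenvalue_root_char_poly[OF A(1)] by auto
  moreover have "degree (char_poly A) = d" "coeff (char_poly A) d = 1"
    using degree_monic_char_poly[OF A(1)] by auto
  ultimately obtain L where L: "finite_ext K L" "ext_degree K L \<le> d ^ 2" "l \<in> L" "m \<in> L"
    using finite_ext_containing_roots[OF K poly_over_char_poly[OF K A]] by blast
  have "subfield L" using L(1) unfolding finite_ext_def by blast
  then have "l * inverse m \<in> L"
    using L(3,4) by (intro subfield_mult subfield_inverse)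
  then have "l / m \<in> L" by (simp add: divide_inverse)
  moreover have "root_of_unity (l / m)"
    unfolding root_of_unity_def using M eq m(2) by (auto simp: power_divide)
  ultimately have "(l / m) ^ N0 = 1" using roots_of_unity L(1,2) by blast
  then show ?thesis using m(2) by (simp add: power_divide)
qed

lemma pow_mat_vec_eq_poly_mat_vec_pow:
  assumes K: "subfield K" and A: "A \<in> carrier_mat d d" "entries_in K A"
    and B: "B \<in> carrier_mat d d" "B * A = 1\<^sub>m d"
    and roots_of_unity: "\<forall>L. finite_ext K L \<and> ext_degree K L \<le> d ^ 2 \<longrightarrow>
            (\<forall>z\<in>L. root_of_unity z \<longrightarrow> z ^ N = 1)"
    and N: "N > 0" and n: "n > 0" and v: "v \<in> carrier_vec d"
  obtains Q where "(A ^\<^sub>m N) *\<^sub>v v = poly_mat_vec (A ^\<^sub>m n) Q v"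
proof -
  obtain cs where cs: "\<forall>c\<in>set cs. eigenvalue A c" "poly_mat_vec A (\<Prod>c\<leftarrow>cs. [:- c, 1:]) v = 0\<^sub>v d"
    using eigenvalue_product_annihilates[OF A(1) v] by blast
  have nz: "\<forall>c\<in>set cs. c \<noteq> 0" using cs(1) eigenvalue_nonzero_if_left_invertible[OF A(1) B] by blast
  have pow_eq: "c ^ N = c' ^ N"
    if c: "c \<in> set cs" "c' \<in> set cs" "c ^ (N * n) = c' ^ (N * n)" for c c'
    using eigenvalue_pow_eq_if_pow_eq[OF K A roots_of_unity bspec[OF cs(1) c(1)]
        bspec[OF cs(1) c(2)] bspec[OF nz c(2)] _ c(3)] N n
    by simp
  obtain Q where Q: "(\<Prod>c\<leftarrow>cs. [:- c, 1:]) dvd monom 1 N - Q \<circ>\<^sub>p monom 1 n"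
    using pow_as_poly_of_pow[of n cs N] n nz pow_eq by blast
  have "poly_mat_vec A (monom 1 N) v = poly_mat_vec A (Q \<circ>\<^sub>p monom 1 n) v"
    by (rule poly_mat_vec_eq_if_dvd[OF A(1) v Q cs(2)])
  then have "(A ^\<^sub>m N) *\<^sub>v v = poly_mat_vec (A ^\<^sub>m n) Q v"
    by (simp only: poly_mat_vec_monom[OF A(1) v] poly_mat_vec_pcompose_monom[OF A(1) v])
  then show thesis by (rule that)
qed

theorem mainTheorem11:
  fixes K :: "complex set" and d N0 N :: nat and A :: "complex mat" and V :: "complex vec set"
  assumes "number_field K"
    and "N0 > 0"
    and "\<forall>L. finite_ext K L \<and> ext_degree K L \<le> d ^ 2 \<longrightarrow>
            (\<forall>z\<in>L. root_of_unity z \<longrightarrow> z ^ N0 = 1)"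
    and "N = N0"
    and "A \<in> GL_over d K"
    and "K_subspace K d V"
    and "\<exists>n\<ge>1. invariant_under (A ^\<^sub>m n) V"
  shows "invariant_under (A ^\<^sub>m N) V"
proof -
  have K: "subfield K" using assms(1) unfolding number_field_def finite_ext_def by blast
  obtain B where A: "A \<in> carrier_mat d d" "entries_in K A"
    and B: "B \<in> carrier_mat d d" "B * A = 1\<^sub>m d"
    using assms(5) unfolding GL_over_def by auto
  obtain n where n: "n > 0" "invariant_under (A ^\<^sub>m n) V" using assms(7) by (auto simp: Suc_le_eq)
  show ?thesis
    unfolding invariant_under_def
  proof
    fix v assume v: "v \<in> V"
    then have vK: "v \<in> Kvecs K d" using assms(6) unfolding K_subspace_def by blast
    then obtain Q where Q: "(A ^\<^sub>m N) *\<^sub>v v = poly_mat_vec (A ^\<^sub>m n) Q v"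
      using pow_mat_vec_eq_poly_mat_vec_pow[OF K A B _ _ n(1)] assms(2-4)
      unfolding Kvecs_def by blast
    have "(A ^\<^sub>m N) *\<^sub>v v \<in> Kvecs K d"
      by (rule mult_mat_vec_Kvecs[OF K pow_carrier_mat[OF A(1)] entries_in_pow[OF K A] vK])
    then show "(A ^\<^sub>m N) *\<^sub>v v \<in> V"
      using poly_mat_vec_mem_subspace_if_Kvecs[OF K assms(6) pow_carrier_mat[OF A(1)]
          entries_in_pow[OF K A] n(2) v] Q
      by simp
  qed
qed

end
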